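(* Let $\Lambda$ be a locally finite $k$-graph with no sources or sinks, and let $\alpha$ be an action of $\mathbb{Z}^l$ on $\Lambda$ by automorphisms. Then $\Lambda$ is $\alpha$-cofinal if and only if $\tau^{\sigma,\alpha}$ is irreducible.
   Context: A $k$-graph is a countable category $\Lambda$ with a functor $d:\Lambda\to\mathbb{N}^k$ with unique factorisation; vertices are degree-$0$ morphisms; $v\Lambda w=\{\lambda:r(\lambda)=v,s(\lambda)=w\}$. Locally finite with no sources or sinks: for each $p$ and vertex $v$, $v\Lambda^p$ and $\Lambda^pv$ are finite and nonempty. An automorphism is a bijective degree-preserving functor. $\Lambda^\infty$ is the set of degree-preserving functors $x:\Omega_k\to\Lambda$ ($\Omega_k=\{(a,b)\in\mathbb{N}^k\times\mathbb{N}^k:a\le b\}$, $r(a,b)=(a,a)$, $s(a,b)=(b,b)$, $(a,b)(b,c)=(a,c)$, $d(a,b)=b-a$), topologised by cylinder sets $\lambda\Lambda^\infty=\{x:x(0,d(\lambda))=\lambda\}$; $x(p):=x(p,p)$; $\sigma^p(x)(0,n)=x(p,p+n)$; $\phi^\infty(x)(0,n)=\phi(x(0,n))$. $\tau^{\sigma,\alpha}_{(p,m)}=\sigma^p\circ\alpha^\infty_{-m}$, an action of $\mathbb{N}^k\times\mathbb{N}^l$ on $\Lambda^\infty$. Points $x,y$ are trajectory equivalent if $\tau^{\sigma,\alpha}_s(x)=\tau^{\sigma,\alpha}_t(y)$ for some $s,t$; $W$ is invariant if it contains every point trajectory equivalent to one of its points; $\tau^{\sigma,\alpha}$ is irreducible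 if the only open invariant subsets of $\Lambda^\infty$ are $\emptyset$ and $\Lambda^\infty$. $\Lambda$ is $\alpha$-cofinal if for every vertex $v$ and $x\in\Lambda^\infty$ there exist $p\in\mathbb{N}^k$ and $m,n\in\mathbb{N}^l$ with $\alpha_{-m}(v)\Lambda\alpha_{-n}(x(p))\ne\emptyset$. *)

theory Defs
  imports "HOL-Analysis.Analysis" "HOL-Library.Function_Algebras"
begin

text \<open>A small category whose morphisms are all elements of type 'a.
  r = range (codomain identity), s = source (domain identity),
  cmp x y is the composite "x y" (first y, then x), meaningful when s x = r y.\<close>

definition is_category :: "('a \<Rightarrow> 'a) \<Rightarrow> ('a \<Rightarrow> 'a) \<Rightarrow> ('a \<Rightarrow> 'a \<Rightarrow> 'a) \<Rightarrow> bool" where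
  "is_category r s cmp \<longleftrightarrow>
     (\<forall>x. r (r x) = r x \<and> s (r x) = r x \<and> r (s x) = s x \<and> s (s x) = s x) \<and>
     (\<forall>x y. s x = r y \<longrightarrow> r (cmp x y) = r x \<and> s (cmp x y) = s y) \<and>
     (\<forall>x y z. s x = r y \<and> s y = r z \<longrightarrow> cmp (cmp x y) z = cmp x (cmp y z)) \<and>
     (\<forall>x. cmp (r x) x = x \<and> cmp x (s x) = x)"

definition is_kgraph :: "('a \<Rightarrow> 'a) \<Rightarrow> ('a \<Rightarrow> 'a) \<Rightarrow> ('a \<Rightarrow> 'a \<Rightarrow> 'a) \<Rightarrow> ('a \<Rightarrow> ('k::finite \<Rightarrow> nat)) \<Rightarrow> bool" where
  "is_kgraph r s cmp d \<longleftrightarrow>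
     countable (UNIV :: 'a set) \<and>
     is_category r s cmp \<and>
     (\<forall>x. d (r x) = 0) \<and>
     (\<forall>x y. s x = r y \<longrightarrow> d (cmp x y) = d x + d y) \<and>
     (\<forall>lam m n. d lam = m + n \<longrightarrow>
        (\<exists>!p. s (fst p) = r (snd p) \<and> cmp (fst p) (snd p) = lam \<and> d (fst p) = m \<and> d (snd p) = n))"

definition is_vertex :: "('a \<Rightarrow> ('k \<Rightarrow> nat)) \<Rightarrow> 'a \<Rightarrow> bool" where
  "is_vertex d v \<longleftrightarrow> d v = 0"

definition locally_finite_no_sources_sinks ::
  "('a \<Rightarrow> 'a) \<Rightarrow> ('a \<Rightarrow> 'a) \<Rightarrow> ('a \<Rightarrow> ('k \<Rightarrow> nat)) \<Rightarrow> bool" where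
  "locally_finite_no_sources_sinks r s d \<longleftrightarrow>
     (\<forall>v p. is_vertex d v \<longrightarrow>
        finite {lam. r lam = v \<and> d lam = p} \<and> {lam. r lam = v \<and> d lam = p} \<noteq> {} \<and>
        finite {lam. s lam = v \<and> d lam = p} \<and> {lam. s lam = v \<and> d lam = p} \<noteq> {})"

definition is_kgraph_aut ::
  "('a \<Rightarrow> 'a) \<Rightarrow> ('a \<Rightarrow> 'a) \<Rightarrow> ('a \<Rightarrow> 'a \<Rightarrow> 'a) \<Rightarrow> ('a \<Rightarrow> ('k \<Rightarrow> nat)) \<Rightarrow> ('a \<Rightarrow> 'a) \<Rightarrow> bool" where
  "is_kgraph_aut r s cmp d phi \<longleftrightarrow>
     bij phi \<and> (\<forall>x. d (phi x) = d x) \<and>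
     (\<forall>x. phi (r x) = r (phi x) \<and> phi (s x) = s (phi x)) \<and>
     (\<forall>x y. s x = r y \<longrightarrow> phi (cmp x y) = cmp (phi x) (phi y))"

definition is_aut_action ::
  "('a \<Rightarrow> 'a) \<Rightarrow> ('a \<Rightarrow> 'a) \<Rightarrow> ('a \<Rightarrow> 'a \<Rightarrow> 'a) \<Rightarrow> ('a \<Rightarrow> ('k \<Rightarrow> nat)) \<Rightarrow>
   (('l::finite \<Rightarrow> int) \<Rightarrow> 'a \<Rightarrow> 'a) \<Rightarrow> bool" where
  "is_aut_action r s cmp d alpha \<longleftrightarrow>
     alpha 0 = id \<and> (\<forall>m n. alpha (m + n) = alpha m \<circ> alpha n) \<and>
     (\<forall>m. is_kgraph_aut r s cmp d (alpha m))"

text \<open>Infinite paths: degree-preserving functors Omega_k -> Lambda, represented as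
  functions on pairs (a,b), with the value undefined off the domain a <= b.\<close>
definition inf_paths ::
  "('a \<Rightarrow> 'a) \<Rightarrow> ('a \<Rightarrow> 'a) \<Rightarrow> ('a \<Rightarrow> 'a \<Rightarrow> 'a) \<Rightarrow> ('a \<Rightarrow> ('k \<Rightarrow> nat)) \<Rightarrow>
   ((('k \<Rightarrow> nat) \<times> ('k \<Rightarrow> nat)) \<Rightarrow> 'a) set" where
  "inf_paths r s cmp d = {x.
     (\<forall>a b. \<not> a \<le> b \<longrightarrow> x (a, b) = undefined) \<and>
     (\<forall>a b. a \<le> b \<longrightarrow> d (x (a, b)) = b - a \<and> r (x (a, b)) = x (a, a) \<and> s (x (a, b)) = x (b, b)) \<and>
     (\<forall>a b c. a \<le> b \<and> b \<le> c \<longrightarrow> x (a, c) = cmp (x (a, b)) (x (b, c)))}"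

definition cylinder ::
  "('a \<Rightarrow> 'a) \<Rightarrow> ('a \<Rightarrow> 'a) \<Rightarrow> ('a \<Rightarrow> 'a \<Rightarrow> 'a) \<Rightarrow> ('a \<Rightarrow> ('k \<Rightarrow> nat)) \<Rightarrow> 'a \<Rightarrow>
   ((('k \<Rightarrow> nat) \<times> ('k \<Rightarrow> nat)) \<Rightarrow> 'a) set" where
  "cylinder r s cmp d lam = {x \<in> inf_paths r s cmp d. x (0, d lam) = lam}"

definition path_topology ::
  "('a \<Rightarrow> 'a) \<Rightarrow> ('a \<Rightarrow> 'a) \<Rightarrow> ('a \<Rightarrow> 'a \<Rightarrow> 'a) \<Rightarrow> ('a \<Rightarrow> ('k \<Rightarrow> nat)) \<Rightarrow>
   ((('k \<Rightarrow> nat) \<times> ('k \<Rightarrow> nat)) \<Rightarrow> 'a) topology" where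
  "path_topology r s cmp d = topology_generated_by (range (cylinder r s cmp d))"

definition shift :: "('k \<Rightarrow> nat) \<Rightarrow> ((('k \<Rightarrow> nat) \<times> ('k \<Rightarrow> nat)) \<Rightarrow> 'a) \<Rightarrow>
   ((('k \<Rightarrow> nat) \<times> ('k \<Rightarrow> nat)) \<Rightarrow> 'a)" where
  "shift p x = (\<lambda>(a, b). x (a + p, b + p))"

definition path_map :: "('a \<Rightarrow> 'a) \<Rightarrow> ((('k \<Rightarrow> nat) \<times> ('k \<Rightarrow> nat)) \<Rightarrow> 'a) \<Rightarrow>
   ((('k \<Rightarrow> nat) \<times> ('k \<Rightarrow> nat)) \<Rightarrow> 'a)" where
  "path_map phi x = (\<lambda>(a, b). if a \<le> b then phi (x (a, b)) else undefined)"

definition tau :: "(('l \<Rightarrow> int) \<Rightarrow> 'a \<Rightarrow> 'a) \<Rightarrow> ('k \<Rightarrow> nat) \<Rightarrow> ('l \<Rightarrow> nat) \<Rightarrow>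
   ((('k \<Rightarrow> nat) \<times> ('k \<Rightarrow> nat)) \<Rightarrow> 'a) \<Rightarrow> ((('k \<Rightarrow> nat) \<times> ('k \<Rightarrow> nat)) \<Rightarrow> 'a)" where
  "tau alpha p m x = shift p (path_map (alpha (\<lambda>i. - int (m i))) x)"

definition traj_equiv :: "(('l \<Rightarrow> int) \<Rightarrow> 'a \<Rightarrow> 'a) \<Rightarrow>
   ((('k \<Rightarrow> nat) \<times> ('k \<Rightarrow> nat)) \<Rightarrow> 'a) \<Rightarrow> ((('k \<Rightarrow> nat) \<times> ('k \<Rightarrow> nat)) \<Rightarrow> 'a) \<Rightarrow> bool" where
  "traj_equiv alpha x y \<longleftrightarrow> (\<exists>p m q n. tau alpha p m x = tau alpha q n y)"

definition tau_invariant ::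
  "('a \<Rightarrow> 'a) \<Rightarrow> ('a \<Rightarrow> 'a) \<Rightarrow> ('a \<Rightarrow> 'a \<Rightarrow> 'a) \<Rightarrow> ('a \<Rightarrow> ('k \<Rightarrow> nat)) \<Rightarrow>
   (('l \<Rightarrow> int) \<Rightarrow> 'a \<Rightarrow> 'a) \<Rightarrow> ((('k \<Rightarrow> nat) \<times> ('k \<Rightarrow> nat)) \<Rightarrow> 'a) set \<Rightarrow> bool" where
  "tau_invariant r s cmp d alpha W \<longleftrightarrow>
     (\<forall>x \<in> W. \<forall>y \<in> inf_paths r s cmp d. traj_equiv alpha x y \<longrightarrow> y \<in> W)"

definition tau_irreducible ::
  "('a \<Rightarrow> 'a) \<Rightarrow> ('a \<Rightarrow> 'a) \<Rightarrow> ('a \<Rightarrow> 'a \<Rightarrow> 'a) \<Rightarrow> ('a \<Rightarrow> ('k \<Rightarrow> nat)) \<Rightarrow>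
   (('l \<Rightarrow> int) \<Rightarrow> 'a \<Rightarrow> 'a) \<Rightarrow> bool" where
  "tau_irreducible r s cmp d alpha \<longleftrightarrow>
     (\<forall>W. openin (path_topology r s cmp d) W \<and> tau_invariant r s cmp d alpha W \<longrightarrow>
        W = {} \<or> W = inf_paths r s cmp d)"

definition alpha_cofinal ::
  "('a \<Rightarrow> 'a) \<Rightarrow> ('a \<Rightarrow> 'a) \<Rightarrow> ('a \<Rightarrow> 'a \<Rightarrow> 'a) \<Rightarrow> ('a \<Rightarrow> ('k \<Rightarrow> nat)) \<Rightarrow>
   (('l \<Rightarrow> int) \<Rightarrow> 'a \<Rightarrow> 'a) \<Rightarrow> bool" where
  "alpha_cofinal r s cmp d alpha \<longleftrightarrow>
     (\<forall>v x. is_vertex d v \<and> x \<in> inf_paths r s cmp d \<longrightarrow>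
        (\<exists>(p::'k \<Rightarrow> nat) (m::'l \<Rightarrow> nat) (n::'l \<Rightarrow> nat).
           {lam. r lam = alpha (\<lambda>i. - int (m i)) v \<and> s lam = alpha (\<lambda>i. - int (n i)) (x (p, p))} \<noteq> {}))"

end

theory Submission imports Defs begin

text \<open>If \<Lambda> is \<alpha>-cofinal and W is a nonempty open invariant set, W contains a cylinder
  \<mu>\<Lambda>^\<infinity>. Given any path y, cofinality yields \<lambda> from a translate of s(\<mu>) to a translate
  of a vertex y(p) of y; prepending \<mu> to a translate of \<lambda> followed by \<tau>(y) gives a path in
  \<mu>\<Lambda>^\<infinity> trajectory equivalent to y, so y \<in> W. Conversely, for a vertex v the set of paths
  y admitting such a \<lambda> from a translate of v to a translate of a vertex of y is open, invariant,
  and nonempty because v has no sources, hence it is all of \<Lambda>^\<infinity>.\<close>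

type_synonym ('k, 'a) kpath = "('k \<Rightarrow> nat) \<times> ('k \<Rightarrow> nat) \<Rightarrow> 'a"

lemma nat_fun_le_add_right: "(a::'k \<Rightarrow> nat) \<le> a + b"
  by (simp add: le_fun_def)

lemma nat_fun_le_add_left: "(a::'k \<Rightarrow> nat) \<le> b + a"
  by (simp add: le_fun_def)

lemma nat_fun_add_diff_inverse: "(a::'k \<Rightarrow> nat) \<le> b \<Longrightarrow> a + (b - a) = b"
  by (simp add: le_fun_def fun_eq_iff)

lemma nat_fun_diff_split: "(a::'k \<Rightarrow> nat) \<le> b \<Longrightarrow> b \<le> c \<Longrightarrow> c - a = (b - a) + (c - b)"
  by (simp add: le_fun_def fun_eq_iff)

lemma shift_shift: "shift p (shift q x) = shift (q + p) x"
  by (simp add: shift_def fun_eq_iff ac_simps)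

lemma shift_path_map: "shift p (path_map phi x) = path_map phi (shift p x)"
  by (simp add: shift_def path_map_def fun_eq_iff)

lemma path_map_path_map: "path_map f (path_map g x) = path_map (f \<circ> g) x"
  by (simp add: path_map_def fun_eq_iff)

locale kgraph =
  fixes r s :: "'a \<Rightarrow> 'a" and cmp :: "'a \<Rightarrow> 'a \<Rightarrow> 'a" and d :: "'a \<Rightarrow> ('k::finite \<Rightarrow> nat)"
  assumes kgraph: "is_kgraph r s cmp d"
begin

lemma category: "is_category r s cmp"
  using kgraph by (simp add: is_kgraph_def)

lemma r_r [simp]: "r (r x) = r x" and s_r [simp]: "s (r x) = r x"
  and r_s [simp]: "r (s x) = s x" and s_s [simp]: "s (s x) = s x"
  using category by (auto simp: is_category_def)

lemma r_cmp: "s x = r y \<Longrightarrow> r (cmp x y) = r x" and s_cmp: "s x = r y \<Longrightarrow> s (cmp x y) = s y"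
  using category by (auto simp: is_category_def)

lemma cmp_assoc: "s x = r y \<Longrightarrow> s y = r z \<Longrightarrow> cmp (cmp x y) z = cmp x (cmp y z)"
  using category by (auto simp: is_category_def)

lemma cmp_r [simp]: "cmp (r x) x = x" and cmp_s [simp]: "cmp x (s x) = x"
  using category by (auto simp: is_category_def)

lemma d_r [simp]: "d (r x) = 0"
  using kgraph by (simp add: is_kgraph_def)

lemma d_s [simp]: "d (s x) = 0"
  by (metis d_r r_s)

lemma d_cmp: "s x = r y \<Longrightarrow> d (cmp x y) = d x + d y"
  using kgraph by (simp add: is_kgraph_def)

lemma unique_factorisation:
  "d lam = m + n \<Longrightarrow>
     \<exists>!p. s (fst p) = r (snd p) \<and> cmp (fst p) (snd p) = lam \<and> d (fst p) = m \<and> d (snd p) = n"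
  using kgraph by (simp add: is_kgraph_def)

definition factor :: "'a \<Rightarrow> ('k \<Rightarrow> nat) \<Rightarrow> 'a \<times> 'a" where
  "factor lam n = (SOME p. s (fst p) = r (snd p) \<and> cmp (fst p) (snd p) = lam \<and>
                           d (fst p) = n \<and> d (snd p) = d lam - n)"

definition pre :: "'a \<Rightarrow> ('k \<Rightarrow> nat) \<Rightarrow> 'a" where "pre lam n = fst (factor lam n)"
definition suf :: "'a \<Rightarrow> ('k \<Rightarrow> nat) \<Rightarrow> 'a" where "suf lam n = snd (factor lam n)"

definition seg :: "'a \<Rightarrow> ('k \<Rightarrow> nat) \<Rightarrow> ('k \<Rightarrow> nat) \<Rightarrow> 'a" where
  "seg lam a b = suf (pre lam b) a"

lemma pre_suf_factor:
  assumes "n \<le> d lam"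
  shows "s (pre lam n) = r (suf lam n) \<and> cmp (pre lam n) (suf lam n) = lam \<and>
         d (pre lam n) = n \<and> d (suf lam n) = d lam - n"
proof -
  have "d lam = n + (d lam - n)"
    using nat_fun_add_diff_inverse[OF assms] by simp
  from unique_factorisation[OF this]
  have "\<exists>p. s (fst p) = r (snd p) \<and> cmp (fst p) (snd p) = lam \<and> d (fst p) = n \<and> d (snd p) = d lam - n"
    by blast
  from someI_ex[OF this] show ?thesis
    unfolding pre_def suf_def factor_def by blast
qed

lemma factor_unique:
  assumes "s al = r be" "lam = cmp al be"
  shows pre_cmp: "pre lam (d al) = al" and suf_cmp: "suf lam (d al) = be"
proof -
  have dl: "d lam = d al + d be"
    using assms d_cmp by simp
  from unique_factorisation[OF dl] obtain p where
    uniq: "\<And>q. s (fst q) = r (snd q) \<Longrightarrow> cmp (fst q) (snd q) = lam \<Longrightarrow>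
               d (fst q) = d al \<Longrightarrow> d (snd q) = d be \<Longrightarrow> q = p"
    by blast
  have "(al, be) = p"
    using uniq[of "(al, be)"] assms by simp
  moreover have "(pre lam (d al), suf lam (d al)) = p"
    using pre_suf_factor[of "d al" lam] dl nat_fun_le_add_right
    by (intro uniq) (simp_all add: nat_fun_le_add_right)
  ultimately show "pre lam (d al) = al" "suf lam (d al) = be"
    by auto
qed

lemma vertex_r: "d x = 0 \<Longrightarrow> r x = x"
  using pre_cmp[of "r x" x x] pre_cmp[of x "s x" x] by simp

lemma vertex_s: "d x = 0 \<Longrightarrow> s x = x"
  using suf_cmp[of "r x" x x] suf_cmp[of x "s x" x] by simp

lemma pre_0: "pre lam 0 = r lam"
  using pre_cmp[of "r lam" lam lam] by simp

lemma seg_full: "seg lam 0 (d lam) = lam"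
  using pre_cmp[of lam "s lam" lam] suf_cmp[of "r lam" lam lam] by (simp add: seg_def)

lemma seg_cmp_cmp:
  assumes "s al = r be" "s be = r ga" "lam = cmp (cmp al be) ga"
  shows "seg lam (d al) (d al + d be) = be"
proof -
  have "pre lam (d (cmp al be)) = cmp al be"
    using pre_cmp[of "cmp al be" ga lam] assms s_cmp by simp
  moreover have "d (cmp al be) = d al + d be"
    using assms d_cmp by simp
  ultimately show ?thesis
    using suf_cmp[of al be "cmp al be"] assms by (simp add: seg_def)
qed

lemma seg_factor:
  assumes "a \<le> b" "b \<le> d lam"
  obtains al ga where "s al = r (seg lam a b)" "s (seg lam a b) = r ga"
    "lam = cmp (cmp al (seg lam a b)) ga" "d al = a" "d (seg lam a b) = b - a"
proof -
  let ?P = "pre lam b"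
  have P: "s ?P = r (suf lam b)" "cmp ?P (suf lam b) = lam" "d ?P = b"
    using pre_suf_factor[OF assms(2)] by auto
  have Q: "s (pre ?P a) = r (suf ?P a)" "cmp (pre ?P a) (suf ?P a) = ?P"
    "d (pre ?P a) = a" "d (suf ?P a) = b - a"
    using pre_suf_factor[of a ?P] P assms(1) by auto
  have "s (suf ?P a) = s ?P"
    using Q s_cmp by metis
  then show ?thesis
    using that[of "pre ?P a" "suf lam b"] P Q unfolding seg_def by auto
qed

lemma d_seg: "a \<le> b \<Longrightarrow> b \<le> d lam \<Longrightarrow> d (seg lam a b) = b - a"
  by (rule seg_factor) auto

lemma seg_seg:
  assumes "a \<le> b" "b \<le> c" "c \<le> d lam"
  shows "seg lam a c = cmp (seg lam a b) (seg lam b c) \<and> s (seg lam a b) = r (seg lam b c)"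
proof -
  let ?X = "seg lam a c"
  obtain al ga where X: "s al = r ?X" "s ?X = r ga" "lam = cmp (cmp al ?X) ga" "d al = a" "d ?X = c - a"
    using seg_factor[OF order_trans[OF assms(1,2)] assms(3)] by blast
  have "d ?X = (b - a) + (c - b)"
    using X nat_fun_diff_split assms by simp
  from unique_factorisation[OF this] obtain Y Z where
    YZ: "s Y = r Z" "cmp Y Z = ?X" "d Y = b - a" "d Z = c - b"
    by (metis fst_conv snd_conv)
  have rY: "r Y = r ?X" and sZ: "s Z = s ?X"
    using YZ r_cmp s_cmp by metis+
  have alY: "s (cmp al Y) = r Z" "d (cmp al Y) = b"
    using s_cmp[of al Y] d_cmp[of al Y] X rY YZ nat_fun_add_diff_inverse assms by simp_all
  have lam2: "lam = cmp (cmp (cmp al Y) Z) ga"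
    using X YZ rY cmp_assoc[of al Y Z] by simp
  then have lam1: "lam = cmp (cmp al Y) (cmp Z ga)"
    using cmp_assoc[of "cmp al Y" Z ga] alY sZ X by simp
  have "seg lam (d al) (d al + d Y) = Y"
    using seg_cmp_cmp[OF _ _ lam1] X rY YZ r_cmp sZ by metis
  moreover have "seg lam (d (cmp al Y)) (d (cmp al Y) + d Z) = Z"
    using seg_cmp_cmp[OF alY(1) _ lam2] sZ X by simp
  moreover have "d al + d Y = b" "b + d Z = c"
    using X YZ nat_fun_add_diff_inverse assms by simp_all
  ultimately have "seg lam a b = Y" "seg lam b c = Z"
    using alY X by auto
  then show ?thesis
    using YZ by simp
qed

lemma pre_pre:
  assumes "b \<le> c" "c \<le> d lam"
  shows "pre (pre lam c) b = pre lam b"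
proof -
  let ?P = "pre lam c"
  have P: "s ?P = r (suf lam c)" "cmp ?P (suf lam c) = lam" "d ?P = c"
    using pre_suf_factor[OF assms(2)] by auto
  have Q: "s (pre ?P b) = r (suf ?P b)" "cmp (pre ?P b) (suf ?P b) = ?P" "d (pre ?P b) = b"
    using pre_suf_factor[of b ?P] P assms(1) by auto
  have sQ: "s (suf ?P b) = s ?P"
    using s_cmp[OF Q(1)] unfolding Q(2) by (rule sym)
  have "s (pre ?P b) = r (cmp (suf ?P b) (suf lam c))"
    using Q(1) r_cmp sQ P(1) by simp
  moreover have "lam = cmp (pre ?P b) (cmp (suf ?P b) (suf lam c))"
    using P Q cmp_assoc[of "pre ?P b" "suf ?P b" "suf lam c"] sQ by simp
  ultimately have "pre lam (d (pre ?P b)) = pre ?P b"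
    by (rule pre_cmp)
  then show ?thesis
    using Q(3) by simp
qed

lemma seg_pre: "a \<le> b \<Longrightarrow> b \<le> c \<Longrightarrow> c \<le> d lam \<Longrightarrow> seg (pre lam c) a b = seg lam a b"
  by (simp add: seg_def pre_pre)

lemma r_seg:
  assumes "a \<le> b" "b \<le> d lam"
  shows "r (seg lam a b) = seg lam a a"
proof -
  note split = seg_seg[OF order_refl assms]
  have "r (seg lam a b) = r (seg lam a a)"
    using r_cmp[OF conjunct2[OF split], folded conjunct1[OF split]] .
  moreover have "d (seg lam a a) = 0"
    using d_seg[OF order_refl order_trans[OF assms]] by simp
  ultimately show ?thesis
    using vertex_r by simp
qed

lemma s_seg:
  assumes "a \<le> b" "b \<le> d lam"
  shows "s (seg lam a b) = seg lam b b"
proof -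
  note split = seg_seg[OF assms(1) order_refl assms(2)]
  have "s (seg lam a b) = s (seg lam b b)"
    using s_cmp[OF conjunct2[OF split], folded conjunct1[OF split]] .
  moreover have "d (seg lam b b) = 0"
    using d_seg[OF order_refl assms(2)] by simp
  ultimately show ?thesis
    using vertex_s by simp
qed

abbreviation IP :: "('k, 'a) kpath set" where "IP \<equiv> inf_paths r s cmp d"

lemma inf_pathD:
  assumes "x \<in> IP" "a \<le> b"
  shows "d (x (a, b)) = b - a \<and> r (x (a, b)) = x (a, a) \<and> s (x (a, b)) = x (b, b)"
  using assms by (simp add: inf_paths_def)

lemma inf_path_cmp:
  "x \<in> IP \<Longrightarrow> a \<le> b \<Longrightarrow> b \<le> c \<Longrightarrow> x (a, c) = cmp (x (a, b)) (x (b, c))"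
  by (simp add: inf_paths_def)

lemma inf_path_undefined: "x \<in> IP \<Longrightarrow> \<not> a \<le> b \<Longrightarrow> x (a, b) = undefined"
  by (simp add: inf_paths_def)

lemma path_map_id: "x \<in> IP \<Longrightarrow> path_map id x = x"
  by (auto simp: path_map_def fun_eq_iff inf_path_undefined)

lemma shift_in_inf_paths:
  assumes "x \<in> IP"
  shows "shift p x \<in> IP"
  unfolding inf_paths_def
proof (intro CollectI conjI allI impI)
  fix a b c :: "'k \<Rightarrow> nat"
  show "\<not> a \<le> b \<Longrightarrow> shift p x (a, b) = undefined"
    using inf_path_undefined[OF assms] by (simp add: shift_def)
  show "shift p x (a, c) = cmp (shift p x (a, b)) (shift p x (b, c))" if "a \<le> b \<and> b \<le> c"
  proof -
    have "a + p \<le> b + p" "b + p \<le> c + p"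
      using that by simp_all
    then show ?thesis
      using inf_path_cmp[OF assms] by (simp add: shift_def)
  qed
  assume "a \<le> b"
  then have "a + p \<le> b + p"
    by simp
  note D = inf_pathD[OF assms this]
  show "d (shift p x (a, b)) = b - a"
    using D by (simp add: shift_def)
  show "r (shift p x (a, b)) = shift p x (a, a)" "s (shift p x (a, b)) = shift p x (b, b)"
    using D by (simp_all add: shift_def)
qed

lemma pre_inf_path: "x \<in> IP \<Longrightarrow> n \<le> n' \<Longrightarrow> pre (x (0, n')) n = x (0, n)"
  using pre_cmp[of "x (0, n)" "x (n, n')"] inf_path_cmp[of x 0 n n'] inf_pathD[of x 0 n]
    inf_pathD[of x n n'] by simp

definition path_of_prefixes :: "(('k \<Rightarrow> nat) \<Rightarrow> 'a) \<Rightarrow> ('k, 'a) kpath" where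
  "path_of_prefixes F = (\<lambda>(a, b). if a \<le> b then seg (F b) a b else undefined)"

lemma
  assumes dF: "\<And>c. d (F c) = c" and coherent: "\<And>c c'. c \<le> c' \<Longrightarrow> pre (F c') c = F c"
  shows path_of_prefixes_in_inf_paths: "path_of_prefixes F \<in> IP"
    and path_of_prefixes_prefix: "path_of_prefixes F (0, c) = F c"
proof -
  have seg_F: "path_of_prefixes F (a, b) = seg (F c) a b" if "a \<le> b" "b \<le> c" for a b c
  proof -
    have "path_of_prefixes F (a, b) = seg (pre (F c) b) a b"
      using coherent[OF that(2)] that(1) by (simp add: path_of_prefixes_def)
    also have "\<dots> = seg (F c) a b"
      using that dF by (intro seg_pre) simp_all
    finally show ?thesis .
  qed
  show "path_of_prefixes F (0, c) = F c"
    using seg_F[of 0 c c] seg_full[of "F c"] dF by simp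
  show "path_of_prefixes F \<in> IP"
    unfolding inf_paths_def
  proof (intro CollectI conjI allI impI)
    fix a b c :: "'k \<Rightarrow> nat"
    show "\<not> a \<le> b \<Longrightarrow> path_of_prefixes F (a, b) = undefined"
      by (simp add: path_of_prefixes_def)
    show "path_of_prefixes F (a, c) = cmp (path_of_prefixes F (a, b)) (path_of_prefixes F (b, c))"
      if "a \<le> b \<and> b \<le> c"
    proof -
      have ab: "a \<le> b" and bc: "b \<le> c"
        using that by auto
      then show ?thesis
        using seg_F[OF order_trans[OF ab bc] order_refl] seg_F[OF ab bc] seg_F[OF bc order_refl]
          seg_seg[OF ab bc] dF by simp
    qed
    assume ab: "a \<le> b"
    show "d (path_of_prefixes F (a, b)) = b - a"
      using seg_F[OF ab order_refl] d_seg[OF ab] dF by simp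
    show "r (path_of_prefixes F (a, b)) = path_of_prefixes F (a, a)"
      using seg_F[OF ab order_refl] seg_F[OF order_refl ab] r_seg[OF ab] dF by simp
    show "s (path_of_prefixes F (a, b)) = path_of_prefixes F (b, b)"
      using seg_F[OF ab order_refl] seg_F[of b b b] s_seg[OF ab] dF by simp
  qed
qed

text \<open>The concatenation \<mu>x of the paper, built from its prefixes of degree c, which are the
  prefixes of \<mu>x(0, c).\<close>
definition prepend :: "'a \<Rightarrow> ('k, 'a) kpath \<Rightarrow> ('k, 'a) kpath" where
  "prepend mu x = path_of_prefixes (\<lambda>c. pre (cmp mu (x (0, c))) c)"

context
  fixes mu :: 'a and x :: "('k, 'a) kpath"
  assumes x: "x \<in> IP" and s_mu: "s mu = x (0, 0)"
begin

private lemma s_mu_r: "s mu = r (x (0, c))"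
  using inf_pathD[OF x, of 0 c] s_mu by simp

private lemma d_L: "d (cmp mu (x (0, c))) = d mu + c"
  using d_cmp[OF s_mu_r] inf_pathD[OF x, of 0 c] by simp

private lemma L_cmp:
  assumes "c \<le> c'"
  shows "cmp mu (x (0, c')) = cmp (cmp mu (x (0, c))) (x (c, c'))" "s (cmp mu (x (0, c))) = r (x (c, c'))"
proof -
  have "s (x (0, c)) = r (x (c, c'))"
    using inf_pathD[OF x] assms by simp
  then show "cmp mu (x (0, c')) = cmp (cmp mu (x (0, c))) (x (c, c'))" "s (cmp mu (x (0, c))) = r (x (c, c'))"
    using cmp_assoc[OF s_mu_r] inf_path_cmp[OF x _ assms, of 0] s_cmp[OF s_mu_r] by simp_all
qed

private lemma d_prefix: "d (pre (cmp mu (x (0, c))) c) = c"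
  using pre_suf_factor[of c "cmp mu (x (0, c))"] d_L nat_fun_le_add_left[of c "d mu"] by simp

private lemma prefixes_coherent:
  assumes "c \<le> c'"
  shows "pre (pre (cmp mu (x (0, c'))) c') c = pre (cmp mu (x (0, c))) c"
proof -
  have "pre (pre (cmp mu (x (0, c'))) c') c = pre (cmp mu (x (0, c'))) c"
    using pre_pre[OF assms] d_L nat_fun_le_add_left[of c' "d mu"] by simp
  also have "\<dots> = pre (pre (cmp mu (x (0, c'))) (d mu + c)) c"
    using pre_pre[of c "d mu + c" "cmp mu (x (0, c'))"] d_L nat_fun_le_add_left[of c "d mu"] assms by simp
  also have "pre (cmp mu (x (0, c'))) (d mu + c) = cmp mu (x (0, c))"
    using pre_cmp[OF L_cmp(2)[OF assms] L_cmp(1)[OF assms]] d_L by simp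
  finally show ?thesis .
qed

lemma prepend_in_inf_paths: "prepend mu x \<in> IP"
  unfolding prepend_def by (rule path_of_prefixes_in_inf_paths[OF d_prefix prefixes_coherent])

lemma prepend_prefix: "prepend mu x (0, d mu) = mu"
  using path_of_prefixes_prefix[OF d_prefix prefixes_coherent, of "d mu"] pre_cmp[OF s_mu_r refl]
  by (simp add: prepend_def)

lemma shift_prepend: "shift (d mu) (prepend mu x) = x"
proof (rule ext, clarify)
  fix a b
  show "shift (d mu) (prepend mu x) (a, b) = x (a, b)"
  proof (cases "a \<le> b")
    case False
    then show ?thesis
      using inf_path_undefined[OF prepend_in_inf_paths] inf_path_undefined[OF x]
      by (simp add: shift_def)
  next
    case ab: True
    let ?A = "a + d mu" and ?B = "b + d mu"
    have a0: "0 \<le> a" and bB: "b \<le> ?B"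
      by (simp_all add: nat_fun_le_add_right)
    have "s (cmp mu (x (0, a))) = r (x (a, b))" "s (x (a, b)) = r (x (b, ?B))"
      using L_cmp(2)[OF ab] inf_pathD[OF x ab] inf_pathD[OF x bB] by simp_all
    moreover have "cmp mu (x (0, ?B)) = cmp (cmp (cmp mu (x (0, a))) (x (a, b))) (x (b, ?B))"
      using L_cmp(1)[OF bB] L_cmp(1)[OF ab] by simp
    ultimately have "seg (cmp mu (x (0, ?B))) (d (cmp mu (x (0, a)))) (d (cmp mu (x (0, a))) + d (x (a, b))) = x (a, b)"
      by (rule seg_cmp_cmp)
    moreover have "d (cmp mu (x (0, a))) = ?A"
      using d_L[of a] by (simp add: add.commute)
    moreover have "d (cmp mu (x (0, a))) + d (x (a, b)) = d mu + (a + (b - a))"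
      using d_L[of a] inf_pathD[OF x ab] by (simp add: add.assoc)
    then have "d (cmp mu (x (0, a))) + d (x (a, b)) = ?B"
      unfolding nat_fun_add_diff_inverse[OF ab] by (simp add: add.commute)
    moreover have "seg (pre (cmp mu (x (0, ?B))) ?B) ?A ?B = seg (cmp mu (x (0, ?B))) ?A ?B"
      using ab d_L[of ?B] nat_fun_le_add_left[of ?B "d mu"] by (intro seg_pre) simp_all
    moreover have "?A \<le> ?B"
      using ab by simp
    ultimately show ?thesis
      by (simp add: shift_def prepend_def path_of_prefixes_def)
  qed
qed

end

lemma exists_diagonal_paths:
  assumes nss: "locally_finite_no_sources_sinks r s d" and v: "d v = 0"
  obtains L where "L 0 = v" "\<And>n. d (L n) = (\<lambda>_. n)"
    "\<And>n N. n \<le> N \<Longrightarrow> pre (L N) (\<lambda>_. n) = L n"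
proof -
  have "\<exists>nu. r nu = s lam \<and> d nu = (\<lambda>_. 1)" for lam
    using nss d_s[of lam] unfolding locally_finite_no_sources_sinks_def is_vertex_def by blast
  then obtain next_edge where edge: "\<And>lam. r (next_edge lam) = s lam \<and> d (next_edge lam) = (\<lambda>_. 1)"
    by metis
  define L where "L n = rec_nat v (\<lambda>_ l. cmp l (next_edge l)) n" for n
  have L0: "L 0 = v" and LS: "L (Suc n) = cmp (L n) (next_edge (L n))" for n
    by (simp_all add: L_def)
  have dL: "d (L n) = (\<lambda>_. n)" for n
    by (induction n) (simp_all add: LS L0 v d_cmp edge zero_fun_def plus_fun_def)
  have pre_step: "pre (L (Suc N)) (\<lambda>_. N) = L N" for N
    using pre_cmp[of "L N" "next_edge (L N)"] edge dL LS by simp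
  have "pre (L N) (\<lambda>_. n) = L n" if "n \<le> N" for n N
    using that
  proof (induction N rule: dec_induct)
    case base
    show ?case
      using pre_cmp[of "L n" "s (L n)" "L n"] dL by simp
  next
    case (step N)
    have "pre (L (Suc N)) (\<lambda>_. n) = pre (pre (L (Suc N)) (\<lambda>_. N)) (\<lambda>_. n)"
      using pre_pre[of "\<lambda>_. n" "\<lambda>_. N" "L (Suc N)"] step(1) dL by (simp add: le_fun_def)
    then show ?case
      using pre_step step.IH by simp
  qed
  then show ?thesis
    using that L0 dL by blast
qed

lemma exists_inf_path_from:
  assumes nss: "locally_finite_no_sources_sinks r s d" and v: "d v = 0"
  obtains y where "y \<in> IP" "y (0, 0) = v"
proof -
  obtain L where L0: "L 0 = v" and dL: "\<And>n. d (L n) = (\<lambda>_. n)"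
    and preL: "\<And>n N. n \<le> N \<Longrightarrow> pre (L N) (\<lambda>_. n) = L n"
    using exists_diagonal_paths[OF nss v] by blast
  define S where "S c = (\<Sum>i\<in>UNIV. c i)" for c :: "'k \<Rightarrow> nat"
  have le_S: "c \<le> (\<lambda>_. S c)" for c
    unfolding le_fun_def S_def by (auto intro: member_le_sum)
  have S_mono: "c \<le> c' \<Longrightarrow> S c \<le> S c'" for c c'
    unfolding S_def le_fun_def by (simp add: sum_mono)
  define F where "F c = pre (L (S c)) c" for c
  have dF: "d (F c) = c" for c
    using pre_suf_factor[of c "L (S c)"] le_S dL by (simp add: F_def)
  have coherent: "pre (F c') c = F c" if cc: "c \<le> c'" for c c'
  proof -
    have "pre (F c') c = pre (L (S c')) c"
      using pre_pre[OF cc] le_S dL by (simp add: F_def)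
    also have "\<dots> = pre (pre (L (S c')) (\<lambda>_. S c)) c"
      using pre_pre[of c "\<lambda>_. S c" "L (S c')"] le_S dL S_mono[OF cc] by (simp add: le_fun_def)
    also have "\<dots> = F c"
      using preL[OF S_mono[OF cc]] by (simp add: F_def)
    finally show ?thesis .
  qed
  have "F 0 = v"
    using L0 v pre_0 vertex_r by (simp add: F_def S_def zero_fun_def)
  then show ?thesis
    using that path_of_prefixes_in_inf_paths[OF dF coherent] path_of_prefixes_prefix[OF dF coherent]
    by metis
qed

lemma cylinder_inf_path: "x \<in> IP \<Longrightarrow> y \<in> cylinder r s cmp d (x (0, n)) \<longleftrightarrow> y \<in> IP \<and> y (0, n) = x (0, n)"
  using inf_pathD[of x 0 n] by (simp add: cylinder_def)

lemma cylinder_antimono: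
  assumes "x \<in> IP" "n \<le> n'"
  shows "cylinder r s cmp d (x (0, n')) \<subseteq> cylinder r s cmp d (x (0, n))"
  using assms pre_inf_path cylinder_inf_path by (metis subsetI)

lemma openin_path_topologyD:
  assumes "openin (path_topology r s cmp d) W"
  shows "W \<subseteq> IP \<and> (\<forall>x\<in>W. \<exists>n. cylinder r s cmp d (x (0, n)) \<subseteq> W)"
proof -
  from assms have "generate_topology_on (range (cylinder r s cmp d)) W"
    by (simp add: path_topology_def openin_topology_generated_by_iff)
  then show ?thesis
  proof (induction rule: generate_topology_on.induct)
    case Empty
    then show ?case by simp
  next
    case (Int a b)
    show ?case
    proof (intro conjI ballI)
      show "a \<inter> b \<subseteq> IP"
        using Int by auto
      fix x assume x: "x \<in> a \<inter> b"
      then obtain n1 n2 where "cylinder r s cmp d (x (0, n1)) \<subseteq> a" "cylinder r s cmp d (x (0, n2)) \<subseteq> b"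
        using Int by blast
      moreover have "x \<in> IP"
        using x Int by auto
      ultimately have "cylinder r s cmp d (x (0, n1 + n2)) \<subseteq> a \<inter> b"
        using cylinder_antimono[of x n1 "n1 + n2"] cylinder_antimono[of x n2 "n1 + n2"]
          nat_fun_le_add_right[of n1 n2] nat_fun_le_add_left[of n2 n1] by blast
      then show "\<exists>n. cylinder r s cmp d (x (0, n)) \<subseteq> a \<inter> b"
        by blast
    qed
  next
    case (UN K)
    then show ?case by blast
  next
    case (Basis c)
    then obtain lam where c: "c = cylinder r s cmp d lam"
      by blast
    show ?case
    proof (intro conjI ballI)
      show "c \<subseteq> IP"
        using c by (auto simp: cylinder_def)
      fix x assume "x \<in> c"
      then have "x (0, d lam) = lam"
        using c by (simp add: cylinder_def)
      then show "\<exists>n. cylinder r s cmp d (x (0, n)) \<subseteq> c"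
        using c by (intro exI[of _ "d lam"]) simp
    qed
  qed
qed

lemma openin_path_topology_iff:
  "openin (path_topology r s cmp d) W \<longleftrightarrow>
     W \<subseteq> IP \<and> (\<forall>x\<in>W. \<exists>n. cylinder r s cmp d (x (0, n)) \<subseteq> W)"
proof
  assume W: "W \<subseteq> IP \<and> (\<forall>x\<in>W. \<exists>n. cylinder r s cmp d (x (0, n)) \<subseteq> W)"
  then have "W = \<Union>{C \<in> range (cylinder r s cmp d). C \<subseteq> W}"
    using cylinder_inf_path by blast
  also have "generate_topology_on (range (cylinder r s cmp d)) \<dots>"
    by (intro generate_topology_on.UN generate_topology_on.Basis) auto
  finally show "openin (path_topology r s cmp d) W"
    by (simp add: path_topology_def openin_topology_generated_by_iff)
qed (rule openin_path_topologyD)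

end

locale kgraph_action = kgraph r s cmp d
  for r s :: "'a \<Rightarrow> 'a" and cmp :: "'a \<Rightarrow> 'a \<Rightarrow> 'a" and d :: "'a \<Rightarrow> ('k::finite \<Rightarrow> nat)" +
  fixes alpha :: "('l::finite \<Rightarrow> int) \<Rightarrow> 'a \<Rightarrow> 'a"
  assumes action: "is_aut_action r s cmp d alpha"
begin

abbreviation alpha_neg :: "('l \<Rightarrow> nat) \<Rightarrow> 'a \<Rightarrow> 'a" where
  "alpha_neg m \<equiv> alpha (\<lambda>i. - int (m i))"

lemma alpha_kgraph_aut: "is_kgraph_aut r s cmp d (alpha g)"
  using action by (simp add: is_aut_action_def)

lemma d_alpha [simp]: "d (alpha g x) = d x"
  and r_alpha: "r (alpha g x) = alpha g (r x)"
  and s_alpha: "s (alpha g x) = alpha g (s x)"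
  and alpha_cmp: "s x = r y \<Longrightarrow> alpha g (cmp x y) = cmp (alpha g x) (alpha g y)"
  using alpha_kgraph_aut by (simp_all add: is_kgraph_aut_def)

lemma alpha_add: "alpha (g + h) = alpha g \<circ> alpha h" and alpha_0: "alpha 0 = id"
  using action by (simp_all add: is_aut_action_def)

lemma alpha_neg_alpha_neg: "alpha_neg m (alpha_neg n x) = alpha_neg (m + n) x"
proof -
  have "(\<lambda>i. - int ((m + n) i)) = (\<lambda>i. - int (m i)) + (\<lambda>i. - int (n i))"
    by (simp add: fun_eq_iff)
  then show ?thesis
    by (simp add: alpha_add)
qed

lemma alpha_neg_inverse: "alpha (\<lambda>i. int (m i)) \<circ> alpha_neg m = id" "alpha_neg m \<circ> alpha (\<lambda>i. int (m i)) = id"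
proof -
  have "(\<lambda>i. int (m i)) + (\<lambda>i. - int (m i)) = 0" "(\<lambda>i. - int (m i)) + (\<lambda>i. int (m i)) = 0"
    by (simp_all add: fun_eq_iff)
  then show "alpha (\<lambda>i. int (m i)) \<circ> alpha_neg m = id" "alpha_neg m \<circ> alpha (\<lambda>i. int (m i)) = id"
    by (metis alpha_add alpha_0)+
qed

lemma alpha_neg_0: "alpha_neg 0 = id"
  using alpha_0 by (simp add: zero_fun_def)

lemma path_map_in_inf_paths:
  assumes "x \<in> IP"
  shows "path_map (alpha g) x \<in> IP"
  unfolding inf_paths_def
proof (intro CollectI conjI allI impI)
  fix a b c :: "'k \<Rightarrow> nat"
  show "\<not> a \<le> b \<Longrightarrow> path_map (alpha g) x (a, b) = undefined"
    by (simp add: path_map_def)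
  show "a \<le> b \<and> b \<le> c \<Longrightarrow>
      path_map (alpha g) x (a, c) = cmp (path_map (alpha g) x (a, b)) (path_map (alpha g) x (b, c))"
    using inf_path_cmp[OF assms, of a b c] inf_pathD[OF assms, of a b] inf_pathD[OF assms, of b c]
    by (auto simp: path_map_def alpha_cmp intro: order_trans)
  assume "a \<le> b"
  with inf_pathD[OF assms, of a b]
  show "d (path_map (alpha g) x (a, b)) = b - a"
    "r (path_map (alpha g) x (a, b)) = path_map (alpha g) x (a, a)"
    "s (path_map (alpha g) x (a, b)) = path_map (alpha g) x (b, b)"
    by (simp_all add: path_map_def r_alpha s_alpha)
qed

lemma tau_in_inf_paths: "x \<in> IP \<Longrightarrow> tau alpha p m x \<in> IP"
  unfolding tau_def by (intro shift_in_inf_paths path_map_in_inf_paths)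

lemma tau_vertex: "x \<in> IP \<Longrightarrow> tau alpha p m x (a, a) = alpha_neg m (x (a + p, a + p))"
  by (simp add: tau_def shift_def path_map_def)

text \<open>The witness is z = \<mu> \<alpha>_m(\<lambda> \<tau>_(p,n)(y)); shifting it by d(\<mu>) + d(\<lambda>) and undoing \<alpha>_m
  returns \<tau>_(p,n)(y).\<close>
lemma traj_equiv_in_cylinder:
  assumes y: "y \<in> IP"
    and r_lam: "r lam = alpha_neg m (s mu)" and s_lam: "s lam = alpha_neg n (y (p, p))"
  shows "\<exists>z \<in> cylinder r s cmp d mu. traj_equiv alpha z y"
proof -
  define u where "u = prepend lam (tau alpha p n y)"
  define z where "z = prepend mu (path_map (alpha (\<lambda>i. int (m i))) u)"
  have s_lam': "s lam = tau alpha p n y (0, 0)"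
    using s_lam tau_vertex[OF y] by simp
  have u: "u \<in> IP" "u (0, 0) = r lam"
    using prepend_in_inf_paths[OF tau_in_inf_paths[OF y] s_lam'] inf_pathD[of u 0 "d lam"]
      prepend_prefix[OF tau_in_inf_paths[OF y] s_lam'] by (simp_all add: u_def)
  have s_mu: "s mu = path_map (alpha (\<lambda>i. int (m i))) u (0, 0)"
    using u r_lam alpha_neg_inverse(1) by (simp add: path_map_def pointfree_idE)
  note u' = path_map_in_inf_paths[OF u(1)]
  have "z \<in> cylinder r s cmp d mu"
    using prepend_in_inf_paths[OF u' s_mu] prepend_prefix[OF u' s_mu] by (simp add: cylinder_def z_def)
  moreover have "tau alpha (d mu + d lam) m z = tau alpha p n y"
  proof -
    have "tau alpha (d mu + d lam) m z = shift (d lam) (path_map (alpha_neg m) (shift (d mu) z))"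
      by (simp add: tau_def shift_shift shift_path_map)
    also have "\<dots> = shift (d lam) u"
      using shift_prepend[OF u' s_mu] path_map_id[OF u(1)]
      by (simp add: z_def path_map_path_map alpha_neg_inverse(2))
    also have "\<dots> = tau alpha p n y"
      using shift_prepend[OF tau_in_inf_paths[OF y] s_lam'] by (simp add: u_def)
    finally show ?thesis .
  qed
  ultimately show ?thesis
    unfolding traj_equiv_def by blast
qed

lemma irreducible_if_cofinal:
  assumes cofinal: "alpha_cofinal r s cmp d alpha"
  shows "tau_irreducible r s cmp d alpha"
  unfolding tau_irreducible_def
proof (intro allI impI)
  fix W assume "openin (path_topology r s cmp d) W \<and> tau_invariant r s cmp d alpha W"
  then have W: "W \<subseteq> IP" "\<forall>x\<in>W. \<exists>n. cylinder r s cmp d (x (0, n)) \<subseteq> W"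
    and inv: "tau_invariant r s cmp d alpha W"
    by (auto simp: openin_path_topology_iff)
  have "W = IP" if nonempty: "W \<noteq> {}"
  proof -
    obtain x n where x: "x \<in> IP" and cyl: "cylinder r s cmp d (x (0, n)) \<subseteq> W"
      using W nonempty by blast
    have "y \<in> W" if y: "y \<in> IP" for y
    proof -
      have "is_vertex d (s (x (0, n)))"
        by (simp add: is_vertex_def)
      then obtain p m n' lam where "r lam = alpha_neg m (s (x (0, n)))" "s lam = alpha_neg n' (y (p, p))"
        using cofinal y unfolding alpha_cofinal_def by blast
      then obtain z where "z \<in> W" "traj_equiv alpha z y"
        using traj_equiv_in_cylinder[OF y] cyl by blast
      then show ?thesis
        using inv y unfolding tau_invariant_def by blast
    qed
    then show "W = IP"
      using W by blast
  qed
  then show "W = {} \<or> W = IP"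
    by blast
qed

definition linked :: "'a \<Rightarrow> ('k, 'a) kpath \<Rightarrow> bool" where
  "linked v y \<longleftrightarrow> (\<exists>p m n. {lam. r lam = alpha_neg m v \<and> s lam = alpha_neg n (y (p, p))} \<noteq> {})"

lemma alpha_cofinal_iff_linked:
  "alpha_cofinal r s cmp d alpha \<longleftrightarrow> (\<forall>v y. d v = 0 \<and> y \<in> IP \<longrightarrow> linked v y)"
  by (simp add: alpha_cofinal_def linked_def is_vertex_def)

lemma linked_start: "d v = 0 \<Longrightarrow> y (0, 0) = v \<Longrightarrow> linked v y"
  unfolding linked_def using vertex_r vertex_s alpha_neg_0
  by (intro exI[of _ 0] ex_in_conv[THEN iffD1, OF exI[of _ v]]) simp

lemma openin_linked: "openin (path_topology r s cmp d) {y \<in> IP. linked v y}"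
  unfolding openin_path_topology_iff
proof (intro conjI ballI)
  fix y assume "y \<in> {y \<in> IP. linked v y}"
  then obtain p m n lam where y: "y \<in> IP" and lam: "r lam = alpha_neg m v" "s lam = alpha_neg n (y (p, p))"
    by (auto simp: linked_def)
  have "linked v z" if "z \<in> cylinder r s cmp d (y (0, p))" for z
  proof -
    have "z \<in> IP" "z (0, p) = y (0, p)"
      using that cylinder_inf_path[OF y] by auto
    then have "z (p, p) = y (p, p)"
      using inf_pathD[of _ 0 p] y by (metis zero_le)
    then show ?thesis
      unfolding linked_def using lam by (intro exI[of _ p] exI[of _ m] exI[of _ n]) auto
  qed
  then show "\<exists>n. cylinder r s cmp d (y (0, n)) \<subseteq> {y \<in> IP. linked v y}"
    by (auto simp: cylinder_def)
qed auto

text \<open>The vertex y(p) is joined to y(p + q) by y(p, p + q); that vertex reappears in the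
  trajectory equivalent path z after translating.\<close>
lemma linked_traj_equiv:
  assumes y: "y \<in> IP" and linked: "linked v y" and equiv: "traj_equiv alpha y z"
  shows "linked v z"
proof -
  obtain q j q' j' where eq: "tau alpha q j y = tau alpha q' j' z"
    using equiv unfolding traj_equiv_def by blast
  obtain p m n lam where lam: "r lam = alpha_neg m v" "s lam = alpha_neg n (y (p, p))"
    using linked by (auto simp: linked_def)
  define e where "e = alpha_neg n (y (p, p + q))"
  have e: "s lam = r e" "s e = alpha_neg n (y (p + q, p + q))"
    using lam inf_pathD[OF y nat_fun_le_add_right[of p q]] by (simp_all add: e_def r_alpha s_alpha)
  have "tau alpha q j y (p, p) = tau alpha q' j' z (p, p)"
    using eq by simp
  then have "alpha_neg j (y (p + q, p + q)) = alpha_neg j' (z (p + q', p + q'))"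
    by (simp add: tau_def shift_def path_map_def add.commute)
  then have "s (alpha_neg j (cmp lam e)) = alpha_neg (n + j') (z (p + q', p + q'))"
    using e s_cmp by (metis alpha_neg_alpha_neg add.commute s_alpha)
  moreover have "r (alpha_neg j (cmp lam e)) = alpha_neg (j + m) v"
    using e lam r_cmp by (simp add: r_alpha alpha_neg_alpha_neg)
  ultimately show ?thesis
    unfolding linked_def by blast
qed

lemma cofinal_if_irreducible:
  assumes nss: "locally_finite_no_sources_sinks r s d" and irreducible: "tau_irreducible r s cmp d alpha"
  shows "alpha_cofinal r s cmp d alpha"
  unfolding alpha_cofinal_iff_linked
proof (intro allI impI)
  fix v x assume "d v = 0 \<and> x \<in> IP"
  then have v: "d v = 0" and x: "x \<in> IP" by auto
  obtain y where "y \<in> IP" "y (0, 0) = v"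
    using exists_inf_path_from[OF nss v] .
  then have "{y \<in> IP. linked v y} \<noteq> {}"
    using linked_start[OF v] by blast
  moreover have "tau_invariant r s cmp d alpha {y \<in> IP. linked v y}"
    using linked_traj_equiv by (auto simp: tau_invariant_def)
  ultimately have "{y \<in> IP. linked v y} = IP"
    using irreducible openin_linked unfolding tau_irreducible_def by blast
  then show "linked v x"
    using x by blast
qed

end

theorem lemma5p7:
  fixes r s :: "'a \<Rightarrow> 'a" and cmp :: "'a \<Rightarrow> 'a \<Rightarrow> 'a"
    and d :: "'a \<Rightarrow> ('k::finite \<Rightarrow> nat)"
    and alpha :: "('l::finite \<Rightarrow> int) \<Rightarrow> 'a \<Rightarrow> 'a"
  assumes "is_kgraph r s cmp d"
    and "locally_finite_no_sources_sinks r s d"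
    and "is_aut_action r s cmp d alpha"
  shows "alpha_cofinal r s cmp d alpha \<longleftrightarrow> tau_irreducible r s cmp d alpha"
proof -
  interpret kgraph_action r s cmp d alpha
    using assms(1,3) by (simp add: kgraph_action_def kgraph_def kgraph_action_axioms_def)
  show ?thesis
    using irreducible_if_cofinal cofinal_if_irreducible[OF assms(2)] by blast
qed

end
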